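(* Let $\hat f:L^2(\Omega,\mathcal{F},\mathbb{P};H)\to U$ be Fréchet differentiable at $X_0\in L^2(\Omega,H)$. Then $$m_{D\hat f(X_0)}(A)u:=D\hat f(X_0)(u\mathbf{1}_A),\qquad A\in\mathcal{F},\ u\in H,$$ defines a vector measure $m_{D\hat f(X_0)}:\mathcal{F}\to L(H,U)$, i.e. $m_{D\hat f(X_0)}(\emptyset)=0$ and $m_{D\hat f(X_0)}(\bigcup_i A_i)=\sum_i m_{D\hat f(X_0)}(A_i)$ (convergence in operator norm) for every sequence of pairwise disjoint $A_i\in\mathcal{F}$.
   Context: $(\Omega,\mathcal{F},\mathbb{P})$ is a probability space; $H,U$ are separable real Hilbert spaces; $L(H,U)$ denotes bounded linear operators with the operator norm. *)

theory Defs
  imports "HOL-Probability.Probability"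
begin

definition L2 :: "'a measure \<Rightarrow> ('a \<Rightarrow> 'h::{real_normed_vector, second_countable_topology}) set" where
  "L2 M = {X. X \<in> borel_measurable M \<and> integrable M (\<lambda>\<omega>. (norm (X \<omega>))\<^sup>2)}"

definition L2norm :: "'a measure \<Rightarrow> ('a \<Rightarrow> 'h::real_normed_vector) \<Rightarrow> real" where
  "L2norm M X = sqrt (\<integral>\<omega>. (norm (X \<omega>))\<^sup>2 \<partial>M)"

text \<open>f is well defined on L^2, i.e. respects almost-everywhere equality.\<close>
definition respects_ae :: "'a measure \<Rightarrow> (('a \<Rightarrow> 'h::{real_normed_vector, second_countable_topology}) \<Rightarrow> 'u) \<Rightarrow> bool" where
  "respects_ae M f \<longleftrightarrow> (\<forall>X\<in>L2 M. \<forall>Y\<in>L2 M. (AE \<omega> in M. X \<omega> = Y \<omega>) \<longrightarrow> f X = f Y)"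

definition bounded_linear_L2 :: "'a measure \<Rightarrow> (('a \<Rightarrow> 'h::{real_normed_vector, second_countable_topology}) \<Rightarrow> 'u::real_normed_vector) \<Rightarrow> bool" where
  "bounded_linear_L2 M D \<longleftrightarrow>
     (\<forall>X\<in>L2 M. \<forall>Y\<in>L2 M. D (\<lambda>\<omega>. X \<omega> + Y \<omega>) = D X + D Y) \<and>
     (\<forall>c. \<forall>X\<in>L2 M. D (\<lambda>\<omega>. c *\<^sub>R X \<omega>) = c *\<^sub>R D X) \<and>
     (\<exists>K. \<forall>X\<in>L2 M. norm (D X) \<le> K * L2norm M X)"

definition frechet_deriv_L2 :: "'a measure \<Rightarrow> (('a \<Rightarrow> 'h::{real_normed_vector, second_countable_topology}) \<Rightarrow> 'u::real_normed_vector)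
    \<Rightarrow> ('a \<Rightarrow> 'h) \<Rightarrow> (('a \<Rightarrow> 'h) \<Rightarrow> 'u) \<Rightarrow> bool" where
  "frechet_deriv_L2 M f X0 D \<longleftrightarrow> bounded_linear_L2 M D \<and>
     (\<forall>e>0. \<exists>d>0. \<forall>Y\<in>L2 M. L2norm M Y < d \<longrightarrow>
        norm (f (\<lambda>\<omega>. X0 \<omega> + Y \<omega>) - f X0 - D Y) \<le> e * L2norm M Y)"

end

theory Submission
  imports Defs
begin

text \<open>Only the bounded linearity of the derivative on L^2 matters: on indicator functions
  u 1_A it yields a finitely additive set function with values in L(H,U) whose norm on A is
  at most K sqrt(P(A)). Finite additivity together with this domination by the measure forces
  countable additivity, since the tails of a disjoint union have vanishing measure.\<close>

lemma additive_empty: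
  fixes m :: "'a set \<Rightarrow> 'b::cancel_comm_monoid_add"
  assumes "additive \<A> m" and "{} \<in> \<A>"
  shows "m {} = 0"
  using additiveD[OF assms(1), of "{}" "{}"] assms(2) by simp

lemma (in ring_of_sets) additive_sum_lessThan:
  fixes m :: "'a set \<Rightarrow> 'b::cancel_comm_monoid_add"
    and n :: nat
  assumes m: "additive M m" and A: "range A \<subseteq> M" and disj: "disjoint_family A"
  shows "(\<Sum>i<n. m (A i)) = m (\<Union>i<n. A i)"
proof (induction n)
  case 0
  show ?case using additive_empty[OF m] by simp
next
  case (Suc n)
  have "(\<Union>i<n. A i) \<inter> A n = {}"
    using disj by (auto simp: disjoint_family_on_def dest: less_imp_neq)
  moreover have "(\<Union>i<n. A i) \<in> M" "A n \<in> M"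
    using A by auto
  ultimately have "m ((\<Union>i<n. A i) \<union> A n) = m (\<Union>i<n. A i) + m (A n)"
    by (rule additiveD[OF m])
  then show ?case
    using Suc by (simp add: lessThan_Suc Un_commute add.commute)
qed

lemma (in ring_of_sets) additive_Diff:
  fixes m :: "'a set \<Rightarrow> 'b::ab_group_add"
  assumes "additive M m" and "A \<in> M" and "B \<in> M" and "B \<subseteq> A"
  shows "m (A - B) = m A - m B"
proof -
  have "m A = m ((A - B) \<union> B)"
    using \<open>B \<subseteq> A\<close> by (simp add: Un_absorb2)
  also have "\<dots> = m (A - B) + m B"
    using assms by (intro additiveD) auto
  finally show ?thesis by simp
qed

lemma (in finite_measure) additive_sums_if_norm_dominated:
  fixes m :: "'a set \<Rightarrow> 'b::real_normed_vector"
  assumes m: "additive (sets M) m"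
    and dom: "\<And>A. A \<in> sets M \<Longrightarrow> norm (m A) \<le> g (measure M A)"
    and g: "isCont g 0" "g 0 = 0"
    and A: "range A \<subseteq> sets M" and disj: "disjoint_family A"
  shows "(\<lambda>i. m (A i)) sums m (\<Union>i. A i)"
proof -
  define B where "B n = (\<Union>i<n. A i)" for n
  have B: "B n \<in> sets M" "B n \<subseteq> (\<Union>i. A i)" for n
    using A by (auto simp: B_def)
  have U: "(\<Union>i. A i) \<in> sets M"
    using A by auto
  have "(\<lambda>n. measure M ((\<Union>i. A i) - B n)) \<longlonglongrightarrow> measure M (\<Inter>n. (\<Union>i. A i) - B n)"
    using B U by (intro finite_Lim_measure_decseq) (auto simp: B_def decseq_def)
  also have "(\<Inter>n. (\<Union>i. A i) - B n) = {}"
    by (auto simp: B_def)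
  finally have "(\<lambda>n. measure M ((\<Union>i. A i) - B n)) \<longlonglongrightarrow> 0"
    by simp
  from isCont_tendsto_compose[OF g(1) this]
  have g_tendsto: "(\<lambda>n. g (measure M ((\<Union>i. A i) - B n))) \<longlonglongrightarrow> 0"
    unfolding g(2) .
  have bound: "norm (m (B n) - m (\<Union>i. A i)) \<le> g (measure M ((\<Union>i. A i) - B n))" for n
  proof -
    have "norm (m (B n) - m (\<Union>i. A i)) = norm (m ((\<Union>i. A i) - B n))"
      unfolding sets.additive_Diff[OF m U B(1) B(2)] by (rule norm_minus_commute)
    also have "\<dots> \<le> g (measure M ((\<Union>i. A i) - B n))"
      using U B(1) by (intro dom) auto
    finally show ?thesis .
  qed
  have "(\<lambda>n. m (B n) - m (\<Union>i. A i)) \<longlonglongrightarrow> 0"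
    by (rule Lim_null_comparison[OF always_eventually[OF allI[OF bound]] g_tendsto])
  then show ?thesis
    unfolding sums_def sets.additive_sum_lessThan[OF m A disj] B_def[symmetric]
    by (rule LIM_zero_cancel)
qed

lemma indicator_scaleR_in_L2:
  fixes u :: "'h::{real_normed_vector, second_countable_topology}"
  assumes "finite_measure M" and "A \<in> sets M"
  shows "(\<lambda>\<omega>. indicator A \<omega> *\<^sub>R u) \<in> L2 M"
    and "L2norm M (\<lambda>\<omega>. indicator A \<omega> *\<^sub>R u) = sqrt (measure M A) * norm u"
proof -
  interpret finite_measure M by fact
  have sq: "(\<lambda>\<omega>. (norm (indicator A \<omega> *\<^sub>R u))\<^sup>2) = (\<lambda>\<omega>. (norm u)\<^sup>2 * indicator A \<omega>)"
    by (auto simp: indicator_def fun_eq_iff)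
  have "integrable M (\<lambda>\<omega>. (norm (indicator A \<omega> *\<^sub>R u))\<^sup>2)"
    unfolding sq using assms(2) by (simp add: integrable_indicator_iff less_top[symmetric])
  then show "(\<lambda>\<omega>. indicator A \<omega> *\<^sub>R u) \<in> L2 M"
    unfolding L2_def using assms(2) by simp
  show "L2norm M (\<lambda>\<omega>. indicator A \<omega> *\<^sub>R u) = sqrt (measure M A) * norm u"
    unfolding L2norm_def sq using assms(2) by (simp add: real_sqrt_mult)
qed

lemma L2norm_nonneg: "L2norm M X \<ge> 0"
  by (simp add: L2norm_def integral_nonneg)

lemma bounded_linear_L2_add:
  assumes "bounded_linear_L2 M D" and "X \<in> L2 M" and "Y \<in> L2 M"
  shows "D (\<lambda>\<omega>. X \<omega> + Y \<omega>) = D X + D Y"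
  using assms unfolding bounded_linear_L2_def by blast

lemma bounded_linear_L2_scaleR:
  assumes "bounded_linear_L2 M D" and "X \<in> L2 M"
  shows "D (\<lambda>\<omega>. c *\<^sub>R X \<omega>) = c *\<^sub>R D X"
  using assms unfolding bounded_linear_L2_def by blast

lemma bounded_linear_L2_nonneg_bound:
  assumes "bounded_linear_L2 M D"
  obtains K where "K \<ge> 0" and "\<And>X. X \<in> L2 M \<Longrightarrow> norm (D X) \<le> K * L2norm M X"
proof -
  obtain K where K: "\<And>X. X \<in> L2 M \<Longrightarrow> norm (D X) \<le> K * L2norm M X"
    using assms unfolding bounded_linear_L2_def by blast
  have "norm (D X) \<le> max K 0 * L2norm M X" if "X \<in> L2 M" for X
    using K[OF that] mult_right_mono[OF max.cobounded1 L2norm_nonneg] by (rule order.trans)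
  then show thesis
    using that[of "max K 0"] by simp
qed

definition indicator_blinfun ::
    "(('a \<Rightarrow> 'h::real_normed_vector) \<Rightarrow> 'u::real_normed_vector) \<Rightarrow> 'a set \<Rightarrow> 'h \<Rightarrow>\<^sub>L 'u" where
  "indicator_blinfun D A = Blinfun (\<lambda>u. D (\<lambda>\<omega>. indicator A \<omega> *\<^sub>R u))"

context
  fixes M :: "'a measure"
    and D :: "('a \<Rightarrow> 'h::{real_normed_vector, second_countable_topology}) \<Rightarrow> 'u::real_normed_vector"
  assumes finite_M: "finite_measure M" and D: "bounded_linear_L2 M D"
begin

lemma bounded_linear_L2_indicator_scaleR:
  assumes "A \<in> sets M"
  shows "bounded_linear (\<lambda>u. D (\<lambda>\<omega>. indicator A \<omega> *\<^sub>R u))"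
proof -
  obtain K where K: "\<And>X. X \<in> L2 M \<Longrightarrow> norm (D X) \<le> K * L2norm M X"
    using D unfolding bounded_linear_L2_def by blast
  note L2 = indicator_scaleR_in_L2[OF finite_M assms]
  show ?thesis
  proof (rule bounded_linear_intro)
    fix u v :: 'h
    show "D (\<lambda>\<omega>. indicator A \<omega> *\<^sub>R (u + v))
        = D (\<lambda>\<omega>. indicator A \<omega> *\<^sub>R u) + D (\<lambda>\<omega>. indicator A \<omega> *\<^sub>R v)"
      using bounded_linear_L2_add[OF D L2(1)[of u] L2(1)[of v]] by (simp add: scaleR_right_distrib)
  next
    fix r :: real and u :: 'h
    show "D (\<lambda>\<omega>. indicator A \<omega> *\<^sub>R r *\<^sub>R u) = r *\<^sub>R D (\<lambda>\<omega>. indicator A \<omega> *\<^sub>R u)"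
      using bounded_linear_L2_scaleR[OF D L2(1)[of u], of r] by (simp add: mult.commute)
  next
    fix u :: 'h
    show "norm (D (\<lambda>\<omega>. indicator A \<omega> *\<^sub>R u)) \<le> norm u * (K * sqrt (measure M A))"
      using K[OF L2(1)[of u]] L2(2)[of u] by (simp add: ac_simps)
  qed
qed

lemma blinfun_apply_indicator_blinfun:
  assumes "A \<in> sets M"
  shows "blinfun_apply (indicator_blinfun D A) u = D (\<lambda>\<omega>. indicator A \<omega> *\<^sub>R u)"
  unfolding indicator_blinfun_def
  using bounded_linear_Blinfun_apply[OF bounded_linear_L2_indicator_scaleR[OF assms]] by simp

lemma additive_indicator_blinfun: "additive (sets M) (indicator_blinfun D)"
  unfolding additive_def
proof (intro ballI impI blinfun_eqI)
  fix A B and u :: 'h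
  assume A: "A \<in> sets M" and B: "B \<in> sets M" and "A \<inter> B = {}"
  then have "(\<lambda>\<omega>. indicator (A \<union> B) \<omega> *\<^sub>R u)
      = (\<lambda>\<omega>. indicator A \<omega> *\<^sub>R u + indicator B \<omega> *\<^sub>R u)"
    by (auto simp: indicator_def fun_eq_iff)
  moreover have "D (\<lambda>\<omega>. indicator A \<omega> *\<^sub>R u + indicator B \<omega> *\<^sub>R u)
      = D (\<lambda>\<omega>. indicator A \<omega> *\<^sub>R u) + D (\<lambda>\<omega>. indicator B \<omega> *\<^sub>R u)"
    by (rule bounded_linear_L2_add[OF D])
      (use indicator_scaleR_in_L2(1)[OF finite_M] A B in auto)
  ultimately show "blinfun_apply (indicator_blinfun D (A \<union> B)) u
      = blinfun_apply (indicator_blinfun D A + indicator_blinfun D B) u"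
    using A B by (simp add: blinfun_apply_indicator_blinfun blinfun.add_left)
qed

lemma norm_indicator_blinfun_le:
  obtains K where "\<And>A. A \<in> sets M \<Longrightarrow> norm (indicator_blinfun D A) \<le> K * sqrt (measure M A)"
proof -
  obtain K where "K \<ge> 0" and K: "\<And>X. X \<in> L2 M \<Longrightarrow> norm (D X) \<le> K * L2norm M X"
    using bounded_linear_L2_nonneg_bound[OF D] by blast
  have "norm (indicator_blinfun D A) \<le> K * sqrt (measure M A)" if A: "A \<in> sets M" for A
  proof (rule norm_blinfun_bound)
    show "0 \<le> K * sqrt (measure M A)"
      using \<open>K \<ge> 0\<close> by simp
    show "norm (blinfun_apply (indicator_blinfun D A) u) \<le> K * sqrt (measure M A) * norm u" for u
      using K[OF indicator_scaleR_in_L2(1)[OF finite_M A, of u]] indicator_scaleR_in_L2(2)[OF finite_M A, of u]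
      by (simp add: blinfun_apply_indicator_blinfun[OF A] mult.assoc)
  qed
  then show thesis
    by (rule that)
qed

lemma indicator_blinfun_sums:
  assumes "range A \<subseteq> sets M" and "disjoint_family A"
  shows "(\<lambda>i. indicator_blinfun D (A i)) sums indicator_blinfun D (\<Union>i. A i)"
proof -
  obtain K where K: "\<And>A. A \<in> sets M \<Longrightarrow> norm (indicator_blinfun D A) \<le> K * sqrt (measure M A)"
    using norm_indicator_blinfun_le by blast
  have "isCont (\<lambda>x. K * sqrt x) 0"
    by (intro continuous_intros)
  then show ?thesis
    using finite_measure.additive_sums_if_norm_dominated[OF finite_M additive_indicator_blinfun K _ _ assms]
    by simp
qed

end

theorem lemma1p2:
  fixes M :: "'a measure"
    and f :: "('a \<Rightarrow> 'h::{real_inner, complete_space, second_countable_topology}) \<Rightarrow> 'u::{real_inner, complete_space, second_countable_topology}"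
    and X0 :: "'a \<Rightarrow> 'h"
    and D :: "('a \<Rightarrow> 'h) \<Rightarrow> 'u"
  assumes "prob_space M"
    and "respects_ae M f"
    and "X0 \<in> L2 M"
    and "frechet_deriv_L2 M f X0 D"
  defines "m \<equiv> (\<lambda>A. Blinfun (\<lambda>u. D (\<lambda>\<omega>. indicator A \<omega> *\<^sub>R u)))"
  shows "(\<forall>A\<in>sets M. bounded_linear (\<lambda>u. D (\<lambda>\<omega>. indicator A \<omega> *\<^sub>R u)))
    \<and> m {} = 0
    \<and> (\<forall>Ai :: nat \<Rightarrow> 'a set. range Ai \<subseteq> sets M \<longrightarrow> disjoint_family Ai \<longrightarrow>
          (\<lambda>i. m (Ai i)) sums m (\<Union>i. Ai i))"
proof -
  have finite_M: "finite_measure M"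
    using \<open>prob_space M\<close> by (simp add: prob_space_def)
  have D: "bounded_linear_L2 M D"
    using \<open>frechet_deriv_L2 M f X0 D\<close> by (simp add: frechet_deriv_L2_def)
  have m: "m = indicator_blinfun D"
    by (simp add: m_def indicator_blinfun_def[abs_def])
  have "m {} = 0"
    unfolding m by (rule additive_empty[OF additive_indicator_blinfun[OF finite_M D]]) simp
  then show ?thesis
    using bounded_linear_L2_indicator_scaleR[OF finite_M D] indicator_blinfun_sums[OF finite_M D]
    unfolding m by blast
qed

end
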